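(* Consider the MAD-HTLC game described in the context, starting from the initial subgame $G(1,\mathrm{red})$. Suppose $\mathcal{A}$ does not know $pre_a$ and both $\mathcal{A}$ and $\mathcal{B}$ follow the prescribed strategies. Then the miners' best-response strategy leads to $\mathcal{B}$ redeeming both MH-Dep and MH-Col for $v^{\mathrm{dep}}+v^{\mathrm{col}}-f^{\mathrm{dc}}_{\mathcal{B}}$ tokens, and $\mathcal{A}$ gets no tokens.
   Context: Blockchain model: there are $n$ miners; miner $i$ has mining power $\lambda_i>0$ with $\sum_i\lambda_i=1$. The system proceeds in discrete rounds; in each round exactly one miner is chosen at random, miner $i$ with probability $\lambda_i$, and creates a block containing one transaction of her choice, receiving that transaction's fee. There is always an unrelated valid transaction available offering the base fee $f$. Publishing a transaction makes all its contents (in particular any preimages it contains) known to everyone. A contract can be redeemed by at most one confirmed transaction. Parties ($\mathcal{A}$, $\mathcal{B}$, miners) are rational and non-myopic, and their utility is the expected number of tokens they own at the end of the game. MAD-HTLC: $\mathcal{B}$ chose random preimages $pre_a,pre_b$ with digests $dig_a=H(pre_a)$, $dig_b=H(pre_b)$; only $\mathcal{B}$ knows $pre_b$; $\mathcal{A}$ knows $pre_a$ only if $\mathcal{B}$ shared it with her (and otherwise never). Two contracts are initiated in block $b_j$ with timeout $T$: MH-Dep holding $v^{\mathrm{dep}}$ tokens and MH-Col holding $v^{\mathrm{col}}$ tokens. MH-Dep can be redeemed via dep-A (signature of $\mathcal{A}$ and $pre_a$; any block), dep-B (signature of $\mathcal{B}$ and $pre_b$; only in a block at least $T$ blocks after initiation),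 or dep-M (both $pre_a$ and $pre_b$, no signature; any block). MH-Col can be redeemed only in a block at least $T$ blocks after initiation, via col-B (signature of $\mathcal{B}$) or col-M (both $pre_a$ and $pre_b$). The game: $T$ rounds creating blocks $b_{j+1},\dots,b_{j+T}$. Each round $\mathcal{A}$ and $\mathcal{B}$ first alternately publish transactions until neither wishes to publish more; then a randomly chosen miner creates the block. $\mathcal{A}$'s relevant transaction is $tx^{\mathrm{dep}}_{\mathcal{A}}$ (MH-Dep via dep-A, requires $pre_a$, fee $f<f^{\mathrm{dep}}_{\mathcal{A}}<v^{\mathrm{dep}}$). $\mathcal{B}$'s are $tx^{\mathrm{dep}}_{\mathcal{B}}$ (MH-Dep via dep-B, fee $f<f^{\mathrm{dep}}_{\mathcal{B}}<v^{\mathrm{dep}}$), $tx^{\mathrm{col}}_{\mathcal{B}}$ (MH-Col via col-B, fee $f<f^{\mathrm{col}}_{\mathcal{B}}<v^{\mathrm{col}}$) and $tx^{\mathrm{dc}}_{\mathcal{B}}$ (both contracts, fee $f<f^{\mathrm{dc}}_{\mathcal{B}}<v^{\mathrm{dep}}+v^{\mathrm{col}}$). A miner creating a block may include an unrelated transaction (fee $f$), any published transaction valid at that point ($tx^{\mathrm{dep}}_{\mathcal{A}}$ while MH-Dep is unredeemed; $tx^{\mathrm{col}}_{\mathcal{B}}$ only in the last round; $tx^{\mathrm{dep}}_{\mathcal{B}}$, $tx^{\mathrm{dc}}_{\mathcal{B}}$ only in the last round while MH-Dep is unredeemed), or, if both $pre_a$ and $pre_b$ were revealed by published transactions, her own transaction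 redeeming MH-Dep via dep-M (while unredeemed; reward $v^{\mathrm{dep}}$), MH-Col via col-M (last round; reward $v^{\mathrm{col}}$), or both (last round; reward $v^{\mathrm{dep}}+v^{\mathrm{col}}$). Subgame $G(k,s)$, $k\in[1,T]$, $s\in\{\mathrm{red},\mathrm{irred}\}$: the game starting just before round $k$ with MH-Dep redeemable or already redeemed; the full game is $G(1,\mathrm{red})$. Prescribed strategies: if $\mathcal{A}$ knows $pre_a$ she publishes $tx^{\mathrm{dep}}_{\mathcal{A}}$ within the first $T-1$ rounds; otherwise she publishes nothing. $\mathcal{B}$ waits until block $b_{j+T-1}$ is created; if $\mathcal{A}$ has not published $tx^{\mathrm{dep}}_{\mathcal{A}}$ he publishes $tx^{\mathrm{dc}}_{\mathcal{B}}$, otherwise he publishes $tx^{\mathrm{col}}_{\mathcal{B}}$. *)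

theory Defs
  imports Main "HOL.Real"
begin

text \<open>Model of the MAD-HTLC game. Rounds are numbered 1..T (round k creates block b_{j+k}).
  Miners are indexed by 0..<n with mining powers lam i.\<close>

datatype tx = TxDepA | TxDepB | TxColB | TxDC

datatype act =
    Unrel      \<comment> \<open>unrelated transaction, fee f\<close>
  | IncDepA
  | IncDepB
  | IncColB
  | IncDC
  | MDep       \<comment> \<open>own tx redeeming MH-Dep via dep-M\<close>
  | MCol       \<comment> \<open>own tx redeeming MH-Col via col-M\<close>
  | MBoth      \<comment> \<open>own tx redeeming both\<close>

datatype st = Red | Irred   \<comment> \<open>MH-Dep redeemable / already redeemed\<close>

record params =
  fee :: real
  fA :: real
  fdepB :: real
  fcolB :: real
  fdcB :: real
  vdep :: real
  vcol :: real
  T :: nat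

text \<open>P k = set of transactions published (by A and B) before the block of round k is created.\<close>

definition rev_a :: "(nat \<Rightarrow> tx set) \<Rightarrow> nat \<Rightarrow> bool" where
  "rev_a P k \<longleftrightarrow> TxDepA \<in> P k"

definition rev_b :: "(nat \<Rightarrow> tx set) \<Rightarrow> nat \<Rightarrow> bool" where
  "rev_b P k \<longleftrightarrow> TxDepB \<in> P k \<or> TxDC \<in> P k"

definition valid :: "params \<Rightarrow> (nat \<Rightarrow> tx set) \<Rightarrow> nat \<Rightarrow> st \<Rightarrow> act \<Rightarrow> bool" where
  "valid p P k s a = (case a of
      Unrel \<Rightarrow> True
    | IncDepA \<Rightarrow> TxDepA \<in> P k \<and> s = Red
    | IncDepB \<Rightarrow> TxDepB \<in> P k \<and> k = T p \<and> s = Red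
    | IncColB \<Rightarrow> TxColB \<in> P k \<and> k = T p
    | IncDC \<Rightarrow> TxDC \<in> P k \<and> k = T p \<and> s = Red
    | MDep \<Rightarrow> rev_a P k \<and> rev_b P k \<and> s = Red
    | MCol \<Rightarrow> rev_a P k \<and> rev_b P k \<and> k = T p
    | MBoth \<Rightarrow> rev_a P k \<and> rev_b P k \<and> k = T p \<and> s = Red)"

definition reward :: "params \<Rightarrow> act \<Rightarrow> real" where
  "reward p a = (case a of
      Unrel \<Rightarrow> fee p | IncDepA \<Rightarrow> fA p | IncDepB \<Rightarrow> fdepB p | IncColB \<Rightarrow> fcolB p
    | IncDC \<Rightarrow> fdcB p | MDep \<Rightarrow> vdep p | MCol \<Rightarrow> vcol p | MBoth \<Rightarrow> vdep p + vcol p)"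

definition tokA :: "params \<Rightarrow> act \<Rightarrow> real" where
  "tokA p a = (case a of IncDepA \<Rightarrow> vdep p - fA p | _ \<Rightarrow> 0)"

definition tokB :: "params \<Rightarrow> act \<Rightarrow> real" where
  "tokB p a = (case a of
      IncDepB \<Rightarrow> vdep p - fdepB p
    | IncColB \<Rightarrow> vcol p - fcolB p
    | IncDC \<Rightarrow> vdep p + vcol p - fdcB p
    | _ \<Rightarrow> 0)"

definition next_st :: "act \<Rightarrow> st \<Rightarrow> st" where
  "next_st a s = (if a \<in> {IncDepA, IncDepB, IncDC, MDep, MBoth} then Irred else s)"

text \<open>Prescribed strategies of A and B. knowsA: whether A knows pre_a; tA: round (1..T-1)
  before whose block A publishes tx_dep_A if she knows pre_a. B publishes after block
  b_{j+T-1}, i.e. before the block of round T.\<close>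
definition prescribed_pub :: "params \<Rightarrow> bool \<Rightarrow> nat \<Rightarrow> nat \<Rightarrow> tx set" where
  "prescribed_pub p knowsA tA k =
     (if knowsA \<and> tA \<le> k then {TxDepA} else {}) \<union>
     (if k = T p then (if knowsA \<and> tA \<le> T p - 1 then {TxColB} else {TxDC}) else {})"

text \<open>Miner strategy profile: sigma i k s = block content chosen by miner i when she creates
  the block of round k in state s. Expected future reward of miner i in the subgame with
  r remaining rounds (current round T - r + 1... i.e. with Suc r remaining the round is T - r).\<close>
primrec mU :: "params \<Rightarrow> nat \<Rightarrow> (nat \<Rightarrow> real) \<Rightarrow> (nat \<Rightarrow> nat \<Rightarrow> st \<Rightarrow> act)
                 \<Rightarrow> nat \<Rightarrow> nat \<Rightarrow> st \<Rightarrow> real" where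
  "mU p n lam \<sigma> i 0 s = 0"
| "mU p n lam \<sigma> i (Suc r) s =
     (\<Sum>j<n. lam j * ((if j = i then reward p (\<sigma> j (T p - r) s) else 0)
                      + mU p n lam \<sigma> i r (next_st (\<sigma> j (T p - r) s) s)))"

primrec tokE :: "params \<Rightarrow> nat \<Rightarrow> (nat \<Rightarrow> real) \<Rightarrow> (nat \<Rightarrow> nat \<Rightarrow> st \<Rightarrow> act)
                 \<Rightarrow> (act \<Rightarrow> real) \<Rightarrow> nat \<Rightarrow> st \<Rightarrow> real" where
  "tokE p n lam \<sigma> g 0 s = 0"
| "tokE p n lam \<sigma> g (Suc r) s =
     (\<Sum>j<n. lam j * (g (\<sigma> j (T p - r) s) + tokE p n lam \<sigma> g r (next_st (\<sigma> j (T p - r) s) s)))"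

definition miner_SPE :: "params \<Rightarrow> (nat \<Rightarrow> tx set) \<Rightarrow> nat \<Rightarrow> (nat \<Rightarrow> real)
                         \<Rightarrow> (nat \<Rightarrow> nat \<Rightarrow> st \<Rightarrow> act) \<Rightarrow> bool" where
  "miner_SPE p P n lam \<sigma> \<longleftrightarrow>
     (\<forall>k \<in> {1..T p}. \<forall>s. \<forall>i<n.
        valid p P k s (\<sigma> i k s) \<and>
        (\<forall>a. valid p P k s a \<longrightarrow>
           reward p a + mU p n lam \<sigma> i (T p - k) (next_st a s)
             \<le> reward p (\<sigma> i k s) + mU p n lam \<sigma> i (T p - k) (next_st (\<sigma> i k s) s)))"

end

theory Submission
  imports Defs
begin

text \<open>When \<open>\<A>\<close> does not know \<open>pre_a\<close>, the only transaction ever published is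
  \<open>tx_dc_B\<close>, and it reveals only \<open>pre_b\<close>. So before the last round a miner can only include an
  unrelated transaction, and in the last round, where no future reward is at stake, she
  maximises the immediate fee: she includes \<open>tx_dc_B\<close> whenever MH-Dep is still unredeemed.
  The miners' subgame-perfect profile is therefore unique, and along its play \<open>\<B>\<close> redeems
  both contracts in the last block while \<open>\<A>\<close> receives nothing.\<close>

definition include_dc_last :: "params \<Rightarrow> nat \<Rightarrow> st \<Rightarrow> act" where
  "include_dc_last p k s = (if k = T p \<and> s = Red then IncDC else Unrel)"

lemma valid_without_pre_a_iff:
  "valid p (prescribed_pub p False tA) k s a \<longleftrightarrow> a = include_dc_last p k s \<or> a = Unrel"
  by (cases a) (auto simp: valid_def prescribed_pub_def rev_a_def rev_b_def include_dc_last_def)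

lemma miner_SPE_without_pre_a_iff:
  assumes "fee p < fdcB p"
  shows "miner_SPE p (prescribed_pub p False tA) n lam \<sigma> \<longleftrightarrow>
           (\<forall>k\<in>{1..T p}. \<forall>s. \<forall>i<n. \<sigma> i k s = include_dc_last p k s)"
    (is "?spe \<longleftrightarrow> ?profile")
proof
  assume ?spe
  show ?profile
  proof (intro ballI allI impI)
    fix k s i assume "k \<in> {1..T p}" and "i < n"
    with \<open>?spe\<close> have valid: "valid p (prescribed_pub p False tA) k s (\<sigma> i k s)"
      and best: "\<And>a. valid p (prescribed_pub p False tA) k s a \<Longrightarrow>
        reward p a + mU p n lam \<sigma> i (T p - k) (next_st a s)
          \<le> reward p (\<sigma> i k s) + mU p n lam \<sigma> i (T p - k) (next_st (\<sigma> i k s) s)"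
      unfolding miner_SPE_def by blast+
    have "reward p (include_dc_last p k s) \<le> reward p (\<sigma> i k s)" if "k = T p"
      using best[of "include_dc_last p k s"] that by (simp add: valid_without_pre_a_iff)
    with valid assms show "\<sigma> i k s = include_dc_last p k s"
      by (auto simp: valid_without_pre_a_iff include_dc_last_def reward_def)
  qed
next
  assume ?profile
  show ?spe
    unfolding miner_SPE_def
  proof (intro ballI allI impI conjI)
    fix k s i a assume "k \<in> {1..T p}" and "i < n"
    with \<open>?profile\<close> have \<sigma>: "\<sigma> i k s = include_dc_last p k s"
      by blast
    then show "valid p (prescribed_pub p False tA) k s (\<sigma> i k s)"
      by (simp add: valid_without_pre_a_iff)
    assume "valid p (prescribed_pub p False tA) k s a"
    then consider "a = \<sigma> i k s" | "a = Unrel" "k = T p" "s = Red"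
      using \<sigma> by (auto simp: valid_without_pre_a_iff include_dc_last_def split: if_splits)
    then show "reward p a + mU p n lam \<sigma> i (T p - k) (next_st a s)
        \<le> reward p (\<sigma> i k s) + mU p n lam \<sigma> i (T p - k) (next_st (\<sigma> i k s) s)"
      by cases (use \<sigma> assms in \<open>auto simp: include_dc_last_def reward_def\<close>)
  qed
qed

lemma tokE_include_dc_last:
  assumes \<sigma>: "\<forall>k\<in>{1..T p}. \<forall>s. \<forall>i<n. \<sigma> i k s = include_dc_last p k s"
    and lam_sum: "(\<Sum>i<n. lam i) = 1"
    and "g Unrel = 0"
    and "r < T p"
  shows "tokE p n lam \<sigma> g (Suc r) Red = g IncDC"
  using \<open>r < T p\<close>
proof (induction r)
  case 0
  then have "tokE p n lam \<sigma> g (Suc 0) Red = (\<Sum>j<n. lam j * g IncDC)"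
    using \<sigma> by (simp add: include_dc_last_def)
  then show ?case
    using lam_sum by (simp add: sum_distrib_right[symmetric])
next
  case (Suc r)
  then have "T p - Suc r \<in> {1..T p}" "T p - Suc r \<noteq> T p"
    by auto
  then have "tokE p n lam \<sigma> g (Suc (Suc r)) Red = (\<Sum>j<n. lam j * g IncDC)"
    using \<sigma> Suc \<open>g Unrel = 0\<close> by (simp add: include_dc_last_def next_st_def)
  then show ?case
    using lam_sum by (simp add: sum_distrib_right[symmetric])
qed

theorem lemma3:
  fixes p :: params and n :: nat and lam :: "nat \<Rightarrow> real" and tA :: nat
  assumes lam_pos: "\<forall>i<n. lam i > 0"
    and lam_sum: "(\<Sum>i<n. lam i) = 1"
    and T_pos: "T p \<ge> 1"
    and fA: "fee p < fA p" "fA p < vdep p"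
    and fdepB: "fee p < fdepB p" "fdepB p < vdep p"
    and fcolB: "fee p < fcolB p" "fcolB p < vcol p"
    and fdcB: "fee p < fdcB p" "fdcB p < vdep p + vcol p"
  shows "(\<exists>\<sigma>. miner_SPE p (prescribed_pub p False tA) n lam \<sigma>) \<and>
         (\<forall>\<sigma>. miner_SPE p (prescribed_pub p False tA) n lam \<sigma> \<longrightarrow>
            (\<forall>i<n. \<sigma> i (T p) Red = IncDC) \<and>
            tokE p n lam \<sigma> (tokB p) (T p) Red = vdep p + vcol p - fdcB p \<and>
            tokE p n lam \<sigma> (tokA p) (T p) Red = 0)"
proof
  show "\<exists>\<sigma>. miner_SPE p (prescribed_pub p False tA) n lam \<sigma>"
    using miner_SPE_without_pre_a_iff[OF fdcB(1), of tA n lam "\<lambda>i. include_dc_last p"] by blast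
  show "\<forall>\<sigma>. miner_SPE p (prescribed_pub p False tA) n lam \<sigma> \<longrightarrow>
      (\<forall>i<n. \<sigma> i (T p) Red = IncDC) \<and>
      tokE p n lam \<sigma> (tokB p) (T p) Red = vdep p + vcol p - fdcB p \<and>
      tokE p n lam \<sigma> (tokA p) (T p) Red = 0"
  proof (intro allI impI)
    fix \<sigma> assume "miner_SPE p (prescribed_pub p False tA) n lam \<sigma>"
    then have \<sigma>: "\<forall>k\<in>{1..T p}. \<forall>s. \<forall>i<n. \<sigma> i k s = include_dc_last p k s"
      using miner_SPE_without_pre_a_iff[OF fdcB(1)] by blast
    have "tokE p n lam \<sigma> g (T p) Red = g IncDC" if "g Unrel = 0" for g
      using tokE_include_dc_last[where g = g and r = "T p - 1", OF \<sigma> lam_sum that] T_pos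
      by (simp del: tokE.simps)
    then show "(\<forall>i<n. \<sigma> i (T p) Red = IncDC) \<and>
        tokE p n lam \<sigma> (tokB p) (T p) Red = vdep p + vcol p - fdcB p \<and>
        tokE p n lam \<sigma> (tokA p) (T p) Red = 0"
      using \<sigma> T_pos by (simp add: include_dc_last_def tokA_def tokB_def)
  qed
qed

end
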